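(* Let $H$ be a subdirect product of $H_1 \times \cdots \times H_r$ and let $\pi_i\colon H \to H_i$ be the projection onto the $i$th factor. Assume that $N$ is a soluble normal subgroup of $H$ such that $H/N \cong T^\ell$, where $T$ is a nonabelian simple group and $\ell$ is a positive integer. Then there exist nonnegative integers $\ell_1, \dots, \ell_r$ with $\ell_1 + \cdots + \ell_r \geq \ell$ such that $H_i/N\pi_i \cong T^{\ell_i}$ for all $1 \leq i \leq r$.
   Context: $H$ is a subdirect product of $H_1\times\cdots\times H_r$ means $H \leq H_1\times\cdots\times H_r$ and each coordinate projection restricted to $H$ is surjective. $N\pi_i$ denotes the image of $N$ under $\pi_i$. *)

theory Defs
  imports "HOL-Algebra.Algebra"
begin

definition subdirect_product :: "('i \<Rightarrow> 'a) set \<Rightarrow> ('i \<Rightarrow> ('a, 'b) monoid_scheme) \<Rightarrow> 'i set \<Rightarrow> bool" where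
  "subdirect_product H Hs I \<longleftrightarrow>
     subgroup H (product_group I Hs) \<and> (\<forall>i\<in>I. (\<lambda>h. h i) ` H = carrier (Hs i))"

end

theory Submission
  imports Defs
begin

(*
  Let phi : H -> T^l be the surjection with kernel N given by the isomorphism H/N = T^l.
  For each i the map H -> H_i/N pi_i kills N, so it factors as sigma_i o phi with sigma_i
  onto.  Since T is nonabelian simple, its centre is trivial; hence if x lies in the kernel
  of sigma_i and x_j <> 1, the commutators of x with the j-th factor T_j form a nontrivial
  subset of the normal subgroup (ker sigma_i) /\ T_j of T_j, and sigma_i kills all of T_j.
  So ker sigma_i is the product of the factors it kills, and H_i/N pi_i = T^(l_i) where l_i
  counts the surviving factors.

  Every factor survives some sigma_i: if T_j were killed by all of them, its preimage K in H
  would satisfy K pi_i <= N pi_i for all i.  The projections separate the points of H, so the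
  derived series of K dies where that of N does; then K, and with it T = phi(K), is soluble.
  Hence l_1 + ... + l_r >= l.
*)

section \<open>Nonabelian simple groups\<close>

definition center :: "('a, 'b) monoid_scheme \<Rightarrow> 'a set"
  where "center G = {z \<in> carrier G. \<forall>s\<in>carrier G. z \<otimes>\<^bsub>G\<^esub> s = s \<otimes>\<^bsub>G\<^esub> z}"

lemma (in group) commute_inv_left:
  assumes "x \<in> carrier G" "y \<in> carrier G" "x \<otimes> y = y \<otimes> x"
  shows "inv x \<otimes> y = y \<otimes> inv x"
proof -
  have "inv x \<otimes> y = inv x \<otimes> (y \<otimes> x) \<otimes> inv x" using assms(1,2) by (simp add: m_assoc)
  also have "\<dots> = inv x \<otimes> (x \<otimes> y) \<otimes> inv x" using assms(3) by simp
  also have "\<dots> = y \<otimes> inv x" using assms(1,2) by (simp flip: m_assoc)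
  finally show ?thesis .
qed

lemma (in group) commutator_eq_one_imp_commute:
  assumes "x \<in> carrier G" "y \<in> carrier G" "x \<otimes> y \<otimes> inv x \<otimes> inv y = \<one>"
  shows "x \<otimes> y = y \<otimes> x"
proof -
  have "x \<otimes> y = x \<otimes> y \<otimes> inv x \<otimes> inv y \<otimes> y \<otimes> x"
    using assms(1,2) by (simp add: m_assoc)
  also have "\<dots> = y \<otimes> x"
    using assms by simp
  finally show ?thesis .
qed

lemma (in group) center_subgroup: "subgroup (center G) G"
proof (rule subgroupI)
  show "center G \<subseteq> carrier G" "center G \<noteq> {}"
    by (auto simp: center_def)
next
  fix z assume "z \<in> center G"
  then show "inv z \<in> center G"
    unfolding center_def using commute_inv_left by blast
next
  fix z w assume z: "z \<in> center G" and w: "w \<in> center G"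
  have "z \<otimes> w \<otimes> s = s \<otimes> (z \<otimes> w)" if s: "s \<in> carrier G" for s
  proof -
    have zc: "z \<in> carrier G" and zs: "z \<otimes> s = s \<otimes> z"
      and wc: "w \<in> carrier G" and ws: "w \<otimes> s = s \<otimes> w"
      using z w s by (auto simp: center_def)
    have "z \<otimes> w \<otimes> s = z \<otimes> (s \<otimes> w)" using zc wc s ws by (simp add: m_assoc)
    also have "\<dots> = s \<otimes> z \<otimes> w" using zc wc s zs by (simp flip: m_assoc)
    also have "\<dots> = s \<otimes> (z \<otimes> w)" using zc wc s by (simp add: m_assoc)
    finally show ?thesis .
  qed
  then show "z \<otimes> w \<in> center G"
    using z w unfolding center_def by blast
qed

lemma (in group) center_normal: "center G \<lhd> G"
  unfolding normal_inv_iff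
proof (intro conjI center_subgroup ballI)
  fix x z assume x: "x \<in> carrier G" and z: "z \<in> center G"
  then have "z \<in> carrier G" "x \<otimes> z = z \<otimes> x"
    by (auto simp: center_def)
  then have "x \<otimes> z \<otimes> inv x = z"
    using x by (simp add: m_assoc)
  then show "x \<otimes> z \<otimes> inv x \<in> center G"
    using z by simp
qed

lemma (in simple_group) noncomm_center_trivial:
  assumes "\<not> comm_group G"
  shows "center G = {\<one>}"
proof -
  have "center G \<noteq> carrier G"
  proof
    assume "center G = carrier G"
    then have "comm_group G"
      by (intro group_comm_groupI) (auto simp: center_def)
    then show False
      using assms by contradiction
  qed
  then show ?thesis
    using no_real_normal_subgroup[OF center_normal] by blast
qed

lemma (in simple_group) noncomm_not_solvable:
  assumes noncomm: "\<not> comm_group G"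
  shows "\<not> solvable G"
proof
  assume "solvable G"
  then obtain n where n: "(derived G ^^ n) (carrier G) = {\<one>}"
    using solvable_iff_trivial_derived_seq by blast
  have "derived G (carrier G) \<noteq> {\<one>}"
  proof
    assume trivial: "derived G (carrier G) = {\<one>}"
    have "x \<otimes> y \<otimes> inv x \<otimes> inv y \<in> derived G (carrier G)"
      if "x \<in> carrier G" "y \<in> carrier G" for x y
      unfolding derived_def using that by (intro generate.incl) blast
    then have "comm_group G"
      using trivial by (intro group_comm_groupI commutator_eq_one_imp_commute) auto
    then show False
      using noncomm by contradiction
  qed
  then have "derived G (carrier G) = carrier G"
    using no_real_normal_subgroup[OF derived_self_is_normal] by blast
  then have "(derived G ^^ n) (carrier G) = carrier G"
    by (induction n) simp_all
  then show False
    using n simple_not_triv by simp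
qed

section \<open>Soluble subgroups and quotient maps\<close>

lemma (in group) exp_of_derived_consistent:
  assumes "K \<subseteq> H" "subgroup H G"
  shows "(derived (G\<lparr>carrier := H\<rparr>) ^^ n) K = (derived G ^^ n) K"
proof (induction n)
  case (Suc n)
  have "(derived G ^^ n) K \<subseteq> H"
    using assms by (induction n) (simp_all add: derived_incl)
  then show ?case
    using Suc derived_consistent[OF _ assms(2)] by simp
qed simp

lemma (in group) solvable_seq_if_solvable_subgroup:
  assumes N: "subgroup N G" and solvable: "solvable (G\<lparr>carrier := N\<rparr>)"
  shows "solvable_seq G N"
proof -
  interpret N: group "G\<lparr>carrier := N\<rparr>"
    using subgroup_imp_group[OF N] .
  obtain n where "(derived (G\<lparr>carrier := N\<rparr>) ^^ n) N = {\<one>}"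
    using solvable N.solvable_iff_trivial_derived_seq by auto
  then show ?thesis
    using trivial_derived_seq_imp_solvable[OF N] exp_of_derived_consistent[OF subset_refl N] by simp
qed

lemma solvable_seq_if_images_in_solvable:
  assumes G: "group G"
    and homs: "\<And>i. i \<in> I \<Longrightarrow> group (Hs i) \<and> \<pi> i \<in> hom G (Hs i)"
    and separating: "\<And>x. \<lbrakk>x \<in> carrier G; \<forall>i\<in>I. \<pi> i x = \<one>\<^bsub>Hs i\<^esub>\<rbrakk> \<Longrightarrow> x = \<one>\<^bsub>G\<^esub>"
    and N: "solvable_seq G N" and K: "subgroup K G"
    and images: "\<And>i. i \<in> I \<Longrightarrow> \<pi> i ` K \<subseteq> \<pi> i ` N"
  shows "solvable_seq G K"
proof -
  interpret G: group G by (rule G)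
  obtain n where n: "(derived G ^^ n) N = {\<one>\<^bsub>G\<^esub>}"
    using G.solvable_imp_trivial_derived_seq[OF N] by blast
  have "x = \<one>\<^bsub>G\<^esub>" if x: "x \<in> (derived G ^^ n) K" for x
  proof (rule separating)
    show "x \<in> carrier G"
      using x G.exp_of_derived_in_carrier[OF subgroup.subset[OF K]] by blast
    show "\<forall>i\<in>I. \<pi> i x = \<one>\<^bsub>Hs i\<^esub>"
    proof
      fix i assume i: "i \<in> I"
      interpret \<pi>: group_hom G "Hs i" "\<pi> i"
        using homs[OF i] G by (simp add: group_hom_def group_hom_axioms_def)
      have "\<pi> i x \<in> (derived (Hs i) ^^ n) (\<pi> i ` K)"
        using x \<pi>.exp_of_derived_img[OF subgroup.subset[OF K]] by blast
      also have "\<dots> \<subseteq> (derived (Hs i) ^^ n) (\<pi> i ` N)"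
        using images[OF i] by (rule \<pi>.H.mono_exp_of_derived)
      also have "\<dots> = {\<one>\<^bsub>Hs i\<^esub>}"
        using \<pi>.exp_of_derived_img[OF subgroup.subset[OF G.solvable_imp_subgroup[OF N]]] n
        by simp
      finally show "\<pi> i x = \<one>\<^bsub>Hs i\<^esub>" by simp
    qed
  qed
  moreover have "\<one>\<^bsub>G\<^esub> \<in> (derived G ^^ n) K"
    using subgroup.one_closed[OF G.exp_of_derived_is_subgroup[OF K]] .
  ultimately show ?thesis
    using G.trivial_derived_seq_imp_solvable[OF K, of n] by blast
qed

lemma (in group_hom) subgroup_vimage:
  assumes "subgroup S H"
  shows "subgroup {x \<in> carrier G. h x \<in> S} G"
proof (rule G.subgroupI)
  show "{x \<in> carrier G. h x \<in> S} \<noteq> {}"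
    using subgroup.one_closed[OF assms] by force
  fix x y assume "x \<in> {x \<in> carrier G. h x \<in> S}" "y \<in> {x \<in> carrier G. h x \<in> S}"
  then show "inv\<^bsub>G\<^esub> x \<in> {x \<in> carrier G. h x \<in> S}" "x \<otimes>\<^bsub>G\<^esub> y \<in> {x \<in> carrier G. h x \<in> S}"
    using subgroup.m_inv_closed[OF assms] subgroup.m_closed[OF assms] by simp_all
qed blast

lemma hom_eq_if_kernel_subset:
  assumes G: "group G" and P: "group P" and Q: "group Q"
    and \<phi>: "\<phi> \<in> hom G P" and g: "g \<in> hom G Q" and ker: "kernel G P \<phi> \<subseteq> kernel G Q g"
    and x: "x \<in> carrier G" and y: "y \<in> carrier G" and eq: "\<phi> x = \<phi> y"
  shows "g x = g y"
proof -
  interpret \<phi>: group_hom G P \<phi>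
    using \<phi> G P by (simp add: group_hom_def group_hom_axioms_def)
  interpret g: group_hom G Q g
    using g G Q by (simp add: group_hom_def group_hom_axioms_def)
  have "x \<otimes>\<^bsub>G\<^esub> inv\<^bsub>G\<^esub> y \<in> kernel G P \<phi>"
    using x y eq by (simp add: kernel_def)
  then have "g (x \<otimes>\<^bsub>G\<^esub> inv\<^bsub>G\<^esub> y) = \<one>\<^bsub>Q\<^esub>"
    using ker by (auto simp: kernel_def)
  then have "g x \<otimes>\<^bsub>Q\<^esub> inv\<^bsub>Q\<^esub> g y = \<one>\<^bsub>Q\<^esub>"
    using x y by simp
  then have "inv\<^bsub>Q\<^esub> (inv\<^bsub>Q\<^esub> g y) = g x"
    using x y by (intro g.H.inv_equality) simp_all
  then show ?thesis
    using y by simp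
qed

lemma hom_factors_through_surj:
  assumes G: "group G" and P: "group P" and Q: "group Q"
    and \<phi>: "\<phi> \<in> hom G P" "\<phi> ` carrier G = carrier P"
    and g: "g \<in> hom G Q" and ker: "kernel G P \<phi> \<subseteq> kernel G Q g"
  shows "\<exists>\<sigma> \<in> hom P Q. \<forall>x\<in>carrier G. \<sigma> (\<phi> x) = g x"
proof -
  interpret \<phi>: group_hom G P \<phi>
    using \<phi>(1) G P by (simp add: group_hom_def group_hom_axioms_def)
  define \<sigma> where "\<sigma> y = g (inv_into (carrier G) \<phi> y)" for y
  have \<sigma>\<phi>: "\<sigma> (\<phi> x) = g x" if "x \<in> carrier G" for x
    unfolding \<sigma>_def using that
    by (intro hom_eq_if_kernel_subset[OF G P Q \<phi>(1) g ker]) (simp_all add: inv_into_into f_inv_into_f)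
  have "\<sigma> \<in> hom P Q"
  proof (rule homI)
    fix y assume "y \<in> carrier P"
    then obtain x where "x \<in> carrier G" "y = \<phi> x"
      using \<phi>(2) by blast
    then show "\<sigma> y \<in> carrier Q"
      using g by (simp add: \<sigma>\<phi> hom_in_carrier)
  next
    fix y z assume "y \<in> carrier P" "z \<in> carrier P"
    then obtain x w where "x \<in> carrier G" "y = \<phi> x" "w \<in> carrier G" "z = \<phi> w"
      using \<phi>(2) by blast
    then show "\<sigma> (y \<otimes>\<^bsub>P\<^esub> z) = \<sigma> y \<otimes>\<^bsub>Q\<^esub> \<sigma> z"
      using g by (simp add: \<sigma>\<phi> hom_mult flip: \<phi>.hom_mult)
  qed
  then show ?thesis
    using \<sigma>\<phi> by blast
qed

lemma (in normal) FactGroup_iso_imp_surj_hom: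
  assumes P: "group P" and iso: "G Mod H \<cong> P"
  shows "\<exists>\<phi> \<in> hom G P. \<phi> ` carrier G = carrier P \<and> kernel G P \<phi> = H"
proof -
  obtain \<psi> where \<psi>: "\<psi> \<in> iso (G Mod H) P"
    using iso unfolding is_iso_def by blast
  interpret \<psi>: group_hom "G Mod H" P \<psi>
    using \<psi> P factorgroup_is_group by (simp add: group_hom_def group_hom_axioms_def iso_def)
  define \<phi> where "\<phi> = \<psi> \<circ> (\<lambda>a. H #> a)"
  have "\<phi> \<in> hom G P"
    unfolding \<phi>_def using Group.hom_compose[OF r_coset_hom_Mod \<psi>.homh] .
  moreover have "\<phi> ` carrier G = carrier P"
  proof -
    have "\<phi> ` carrier G = \<psi> ` carrier (G Mod H)"
      unfolding \<phi>_def carrier_FactGroup by (simp add: image_comp)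
    then show ?thesis
      using \<psi> by (simp add: iso_def bij_betw_def)
  qed
  moreover have "kernel G P \<phi> = H"
  proof -
    have inj: "inj_on \<psi> (carrier (G Mod H))"
      using \<psi> by (simp add: iso_def bij_betw_def)
    have "\<psi> (H #> x) = \<one>\<^bsub>P\<^esub> \<longleftrightarrow> x \<in> H" if x: "x \<in> carrier G" for x
    proof -
      have "H #> x \<in> carrier (G Mod H)"
        using x by (simp add: carrier_FactGroup)
      then have "\<psi> (H #> x) = \<psi> H \<longleftrightarrow> H #> x = H"
        using \<psi>.G.one_closed by (simp add: inj_on_eq_iff[OF inj])
      also have "\<dots> \<longleftrightarrow> x \<in> H"
        using x coset_join1 coset_join2 subgroup_axioms by blast
      finally show ?thesis
        using \<psi>.hom_one by simp
    qed
    then show ?thesis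
      using subset by (auto simp: kernel_def \<phi>_def)
  qed
  ultimately show ?thesis
    by blast
qed

lemma quotient_map_factors_through_surj:
  assumes G: "group G" and P: "group P" and F: "group F" and N: "N \<lhd> G"
    and \<phi>: "\<phi> \<in> hom G P" "\<phi> ` carrier G = carrier P" "kernel G P \<phi> = N"
    and f: "f \<in> hom G F" "f ` carrier G = carrier F"
  shows "\<exists>\<sigma> \<in> hom P (F Mod f ` N). \<sigma> ` carrier P = carrier (F Mod f ` N)
           \<and> (\<forall>x\<in>carrier G. \<sigma> (\<phi> x) = f ` N #>\<^bsub>F\<^esub> f x)"
proof -
  interpret N: normal N G by (rule N)
  interpret f: group_hom G F f
    using f(1) G F by (simp add: group_hom_def group_hom_axioms_def)
  interpret fN: normal "f ` N" F
    using N.surj_hom_normal_subgroup[OF f.group_hom_axioms f(2)] .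
  define g where "g = (\<lambda>a. f ` N #>\<^bsub>F\<^esub> a) \<circ> f"
  have g: "g \<in> hom G (F Mod f ` N)"
    unfolding g_def using f(1) fN.r_coset_hom_Mod by (rule hom_compose)
  have "kernel G P \<phi> \<subseteq> kernel G (F Mod f ` N) g"
  proof
    fix x assume "x \<in> kernel G P \<phi>"
    then have x: "x \<in> carrier G" "x \<in> N"
      using \<phi>(3) by (auto simp: kernel_def)
    then have "f ` N #>\<^bsub>F\<^esub> f x = f ` N"
      by (intro fN.rcos_const[OF F]) blast
    then show "x \<in> kernel G (F Mod f ` N) g"
      using x by (simp add: kernel_def g_def)
  qed
  then obtain \<sigma> where \<sigma>: "\<sigma> \<in> hom P (F Mod f ` N)" and \<sigma>\<phi>: "\<forall>x\<in>carrier G. \<sigma> (\<phi> x) = g x"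
    using hom_factors_through_surj[OF G P fN.factorgroup_is_group \<phi>(1,2) g] by blast
  have "\<sigma> ` carrier P = (\<lambda>x. \<sigma> (\<phi> x)) ` carrier G"
    unfolding \<phi>(2)[symmetric] image_image ..
  also have "\<dots> = g ` carrier G"
    using \<sigma>\<phi> by (intro image_cong) simp_all
  also have "\<dots> = carrier (F Mod f ` N)"
    unfolding g_def image_comp[symmetric] f(2) carrier_FactGroup ..
  finally show ?thesis
    using \<sigma> \<sigma>\<phi> unfolding g_def comp_apply by blast
qed

section \<open>Coordinates in direct products\<close>

definition coordinate_embedding :: "('i \<Rightarrow> ('a, 'b) monoid_scheme) \<Rightarrow> 'i set \<Rightarrow> 'i \<Rightarrow> 'a \<Rightarrow> 'i \<Rightarrow> 'a"
  where "coordinate_embedding Gs L j t = (\<lambda>k\<in>L. if k = j then t else \<one>\<^bsub>Gs k\<^esub>)"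

lemma coordinate_embedding_hom:
  assumes groups: "\<And>k. k \<in> L \<Longrightarrow> group (Gs k)" and j: "j \<in> L"
  shows "coordinate_embedding Gs L j \<in> hom (Gs j) (product_group L Gs)"
proof (rule homI)
  have one: "\<one>\<^bsub>Gs k\<^esub> \<in> carrier (Gs k)" if "k \<in> L" for k
    using groups[OF that] by (rule monoid.one_closed[OF group.is_monoid])
  fix x y assume x: "x \<in> carrier (Gs j)" and y: "y \<in> carrier (Gs j)"
  show "coordinate_embedding Gs L j x \<in> carrier (product_group L Gs)"
    unfolding coordinate_embedding_def carrier_product_group restrict_PiE_iff
    using x one by simp
  show "coordinate_embedding Gs L j (x \<otimes>\<^bsub>Gs j\<^esub> y) =
        coordinate_embedding Gs L j x \<otimes>\<^bsub>product_group L Gs\<^esub> coordinate_embedding Gs L j y"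
    unfolding coordinate_embedding_def mult_product_group
  proof (rule restrict_ext)
    fix k assume k: "k \<in> L"
    have "\<one>\<^bsub>Gs k\<^esub> = \<one>\<^bsub>Gs k\<^esub> \<otimes>\<^bsub>Gs k\<^esub> \<one>\<^bsub>Gs k\<^esub>"
      using monoid.l_one[OF group.is_monoid[OF groups[OF k]] one[OF k]] by simp
    then show "(if k = j then x \<otimes>\<^bsub>Gs j\<^esub> y else \<one>\<^bsub>Gs k\<^esub>) =
        (\<lambda>k\<in>L. if k = j then x else \<one>\<^bsub>Gs k\<^esub>) k \<otimes>\<^bsub>Gs k\<^esub> (\<lambda>k\<in>L. if k = j then y else \<one>\<^bsub>Gs k\<^esub>) k"
      using k by simp
  qed
qed

lemma coordinate_embedding_apply_same [simp]:
  "j \<in> L \<Longrightarrow> coordinate_embedding Gs L j t j = t"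
  by (simp add: coordinate_embedding_def)

lemma inj_on_coordinate_embedding:
  assumes "j \<in> L"
  shows "inj_on (coordinate_embedding Gs L j) A"
proof (rule inj_onI)
  fix s t assume "coordinate_embedding Gs L j s = coordinate_embedding Gs L j t"
  then have "coordinate_embedding Gs L j s j = coordinate_embedding Gs L j t j"
    by simp
  then show "s = t"
    using assms by simp
qed

lemma product_group_eq_oneI:
  assumes x: "x \<in> carrier (product_group L Gs)" and one: "\<And>k. k \<in> L \<Longrightarrow> x k = \<one>\<^bsub>Gs k\<^esub>"
  shows "x = \<one>\<^bsub>product_group L Gs\<^esub>"
proof
  fix k
  have "x \<in> (\<Pi>\<^sub>E k\<in>L. carrier (Gs k))"
    using x by simp
  then show "x k = \<one>\<^bsub>product_group L Gs\<^esub> k"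
    using one[of k] PiE_arb[of x L _ k] by (cases "k \<in> L") simp_all
qed

lemma product_group_split_coordinate:
  assumes groups: "\<And>k. k \<in> L \<Longrightarrow> group (Gs k)"
    and x: "x \<in> carrier (product_group L Gs)" and a: "a \<in> L"
  shows "x = (\<lambda>k\<in>L. if k = a then \<one>\<^bsub>Gs k\<^esub> else x k) \<otimes>\<^bsub>product_group L Gs\<^esub> coordinate_embedding Gs L a (x a)"
proof
  fix k
  have xPi: "x \<in> (\<Pi>\<^sub>E k\<in>L. carrier (Gs k))"
    using x by simp
  show "x k = ((\<lambda>k\<in>L. if k = a then \<one>\<^bsub>Gs k\<^esub> else x k) \<otimes>\<^bsub>product_group L Gs\<^esub> coordinate_embedding Gs L a (x a)) k"
  proof (cases "k \<in> L")
    case True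
    have "x k \<in> carrier (Gs k)"
      using xPi True by (simp add: PiE_iff)
    moreover have "monoid (Gs k)"
      using groups[OF True] by (rule group.is_monoid)
    ultimately show ?thesis
      using True by (cases "k = a") (simp_all add: coordinate_embedding_def monoid.l_one monoid.r_one)
  next
    case False
    then show ?thesis
      by (simp add: PiE_arb[OF xPi False])
  qed
qed

lemma hom_eq_one_if_support_killed:
  assumes groups: "\<And>k. k \<in> L \<Longrightarrow> group (Gs k)" and Q: "group Q"
    and \<sigma>: "\<sigma> \<in> hom (product_group L Gs) Q"
    and F: "finite F" "F \<subseteq> L"
    and killed: "\<And>j t. \<lbrakk>j \<in> F; t \<in> carrier (Gs j)\<rbrakk> \<Longrightarrow> \<sigma> (coordinate_embedding Gs L j t) = \<one>\<^bsub>Q\<^esub>"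
    and x: "x \<in> carrier (product_group L Gs)" and support: "\<And>k. k \<in> L - F \<Longrightarrow> x k = \<one>\<^bsub>Gs k\<^esub>"
  shows "\<sigma> x = \<one>\<^bsub>Q\<^esub>"
proof -
  define P where "P = product_group L Gs"
  interpret P: group P
    unfolding P_def using groups by simp
  interpret \<sigma>: group_hom P Q \<sigma>
    using \<sigma> Q P.is_group by (simp add: group_hom_def group_hom_axioms_def P_def)
  show ?thesis
    using F killed x support
  proof (induction F arbitrary: x rule: finite_induct)
    case empty
    then have "x = \<one>\<^bsub>P\<^esub>"
      unfolding P_def by (intro product_group_eq_oneI) simp_all
    then show ?case
      by simp
  next
    case (insert a F)
    define x' where "x' = (\<lambda>k\<in>L. if k = a then \<one>\<^bsub>Gs k\<^esub> else x k)"
    define e where "e = coordinate_embedding Gs L a (x a)"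
    have a: "a \<in> L" "x a \<in> carrier (Gs a)"
      using insert.prems(1,3) by (simp_all add: PiE_iff)
    have x': "x' \<in> carrier P"
      using insert.prems(3) P.one_closed by (simp add: x'_def P_def PiE_iff)
    have e: "e \<in> carrier P"
      using coordinate_embedding_hom[OF groups a(1)] a(2) unfolding P_def e_def by (rule hom_in_carrier)
    have "\<sigma> x' = \<one>\<^bsub>Q\<^esub>"
    proof (rule insert.IH[OF _ _ x'[unfolded P_def]])
      show "F \<subseteq> L"
        using insert.prems(1) by simp
      show "\<sigma> (coordinate_embedding Gs L j t) = \<one>\<^bsub>Q\<^esub>" if "j \<in> F" "t \<in> carrier (Gs j)" for j t
        using insert.prems(2) that by simp
      show "x' k = \<one>\<^bsub>Gs k\<^esub>" if "k \<in> L - F" for k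
        using insert.prems(4)[of k] that by (simp add: x'_def)
    qed
    moreover have "\<sigma> e = \<one>\<^bsub>Q\<^esub>"
      using insert.prems(2) a by (simp add: e_def)
    moreover have "x = x' \<otimes>\<^bsub>P\<^esub> e"
      unfolding x'_def e_def P_def using groups insert.prems(3) a(1) by (rule product_group_split_coordinate)
    then have "\<sigma> x = \<sigma> x' \<otimes>\<^bsub>Q\<^esub> \<sigma> e"
      using x' e by (simp add: \<sigma>.hom_mult)
    ultimately show ?case
      by simp
  qed
qed

lemma coordinate_embedding_commutator:
  assumes groups: "\<And>k. k \<in> L \<Longrightarrow> group (Gs k)"
    and x: "x \<in> carrier (product_group L Gs)" and j: "j \<in> L" and s: "s \<in> carrier (Gs j)"
  shows "coordinate_embedding Gs L j (x j \<otimes>\<^bsub>Gs j\<^esub> s \<otimes>\<^bsub>Gs j\<^esub> inv\<^bsub>Gs j\<^esub> x j \<otimes>\<^bsub>Gs j\<^esub> inv\<^bsub>Gs j\<^esub> s)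
    = x \<otimes>\<^bsub>product_group L Gs\<^esub> coordinate_embedding Gs L j s \<otimes>\<^bsub>product_group L Gs\<^esub> inv\<^bsub>product_group L Gs\<^esub> x
      \<otimes>\<^bsub>product_group L Gs\<^esub> inv\<^bsub>product_group L Gs\<^esub> coordinate_embedding Gs L j s"
    (is "?E ?c = ?rhs")
proof -
  interpret P: group "product_group L Gs"
    using groups by simp
  interpret E: group_hom "Gs j" "product_group L Gs" ?E
    using coordinate_embedding_hom[OF groups j] groups[OF j] P.is_group
    by (simp add: group_hom_def group_hom_axioms_def)
  have xk: "x k \<in> carrier (Gs k)" if "k \<in> L" for k
    using x that by (auto simp: PiE_iff)
  have "?E ?c = x \<otimes>\<^bsub>product_group L Gs\<^esub> ?E s \<otimes>\<^bsub>product_group L Gs\<^esub> inv\<^bsub>product_group L Gs\<^esub> x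
      \<otimes>\<^bsub>product_group L Gs\<^esub> ?E (inv\<^bsub>Gs j\<^esub> s)"
  proof
    fix k
    consider "k = j" | "k \<in> L" "k \<noteq> j" | "k \<notin> L"
      using j by blast
    then show "?E ?c k = (x \<otimes>\<^bsub>product_group L Gs\<^esub> ?E s \<otimes>\<^bsub>product_group L Gs\<^esub> inv\<^bsub>product_group L Gs\<^esub> x
        \<otimes>\<^bsub>product_group L Gs\<^esub> ?E (inv\<^bsub>Gs j\<^esub> s)) k"
    proof cases
      case 1
      show ?thesis
        using 1 j x groups xk[OF j] s by (simp add: coordinate_embedding_def E.G.m_assoc)
    next
      case 2
      interpret Gk: group "Gs k" by (rule groups[OF 2(1)])
      show ?thesis
        using 2 x groups xk[OF 2(1)] by (simp add: coordinate_embedding_def)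
    next
      case 3
      then show ?thesis
        using x groups by (simp add: coordinate_embedding_def)
    qed
  qed
  also have "\<dots> = ?rhs"
    by (simp only: E.hom_inv[OF s])
  finally show ?thesis .
qed

lemma restrict_product_group_hom:
  assumes "K \<subseteq> L"
  shows "(\<lambda>x. restrict x K) \<in> hom (product_group L Gs) (product_group K Gs)"
proof (rule homI)
  fix x y assume "x \<in> carrier (product_group L Gs)" "y \<in> carrier (product_group L Gs)"
  then show "restrict x K \<in> carrier (product_group K Gs)"
    using assms by (auto simp: restrict_PiE_iff PiE_iff)
  show "restrict (x \<otimes>\<^bsub>product_group L Gs\<^esub> y) K = restrict x K \<otimes>\<^bsub>product_group K Gs\<^esub> restrict y K"
    using assms unfolding mult_product_group by (intro restrict_ext) auto
qed

lemma restrict_product_group_surj: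
  assumes groups: "\<And>k. k \<in> L \<Longrightarrow> group (Gs k)" and K: "K \<subseteq> L"
  shows "(\<lambda>x. restrict x K) ` carrier (product_group L Gs) = carrier (product_group K Gs)"
proof (intro equalityI subsetI)
  show "z \<in> carrier (product_group K Gs)" if "z \<in> (\<lambda>x. restrict x K) ` carrier (product_group L Gs)" for z
    using that hom_in_carrier[OF restrict_product_group_hom[OF K]] by blast
next
  fix y assume y: "y \<in> carrier (product_group K Gs)"
  then have yPi: "y \<in> (\<Pi>\<^sub>E k\<in>K. carrier (Gs k))"
    by simp
  define x where "x = (\<lambda>k\<in>L. if k \<in> K then y k else \<one>\<^bsub>Gs k\<^esub>)"
  have "x \<in> carrier (product_group L Gs)"
    using yPi groups by (auto simp: x_def PiE_iff group.is_monoid)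
  moreover have "restrict x K = y"
  proof
    fix k
    show "restrict x K k = y k"
      using K PiE_arb[OF yPi, of k] by (cases "k \<in> K") (auto simp: x_def)
  qed
  ultimately show "y \<in> (\<lambda>x. restrict x K) ` carrier (product_group L Gs)"
    by blast
qed

lemma kernel_restrict_product_group:
  "kernel (product_group L Gs) (product_group K Gs) (\<lambda>x. restrict x K)
     = {x \<in> carrier (product_group L Gs). \<forall>k\<in>K. x k = \<one>\<^bsub>Gs k\<^esub>}"
  by (auto simp: kernel_def fun_eq_iff)

lemma product_group_iso_reindex:
  fixes Gs :: "'i \<Rightarrow> ('a, 'b) monoid_scheme" and \<beta> :: "'j \<Rightarrow> 'i"
  assumes \<beta>: "bij_betw \<beta> A B" and groups: "\<And>i. i \<in> B \<Longrightarrow> group (Gs i)"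
  shows "product_group B Gs \<cong> product_group A (Gs \<circ> \<beta>)"
proof -
  define h :: "('i \<Rightarrow> 'a) \<Rightarrow> 'j \<Rightarrow> 'a" where "h x = (\<lambda>a\<in>A. x (\<beta> a))" for x
  have \<beta>A: "\<beta> a \<in> B" if "a \<in> A" for a
    using \<beta> that by (auto simp: bij_betw_def)
  have groupsA: "\<And>a. a \<in> A \<Longrightarrow> group ((Gs \<circ> \<beta>) a)"
    using groups \<beta>A by simp
  have hom: "h \<in> hom (product_group B Gs) (product_group A (Gs \<circ> \<beta>))"
    using \<beta>A by (intro homI) (auto simp: h_def PiE_iff)
  interpret h: group_hom "product_group B Gs" "product_group A (Gs \<circ> \<beta>)" h
    using hom groups groupsA by (simp add: group_hom_def group_hom_axioms_def)
  have "h \<in> iso (product_group B Gs) (product_group A (Gs \<circ> \<beta>))"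
    unfolding h.iso_iff
  proof (intro conjI ballI impI subsetI)
    fix y assume y: "y \<in> carrier (product_group A (Gs \<circ> \<beta>))"
    define x where "x = (\<lambda>b\<in>B. y (inv_into A \<beta> b))"
    have "x \<in> carrier (product_group B Gs)"
      using y \<beta> by (auto simp: x_def PiE_iff bij_betw_def inv_into_into f_inv_into_f)
    moreover have "h x = y"
      using y \<beta> \<beta>A by (auto simp: h_def x_def fun_eq_iff PiE_iff extensional_def bij_betw_def)
    ultimately show "y \<in> h ` carrier (product_group B Gs)"
      by blast
  next
    fix x assume x: "x \<in> carrier (product_group B Gs)" and "h x = \<one>\<^bsub>product_group A (Gs \<circ> \<beta>)\<^esub>"
    then have "x (\<beta> a) = \<one>\<^bsub>Gs (\<beta> a)\<^esub>" if "a \<in> A" for a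
      using that by (simp add: h_def fun_eq_iff) metis
    then show "x = \<one>\<^bsub>product_group B Gs\<^esub>"
      using x \<beta> by (auto simp: fun_eq_iff PiE_iff extensional_def bij_betw_def)
  qed
  then show ?thesis
    by (rule is_isoI)
qed

corollary product_group_iso_lessThan_card:
  assumes "finite B" and "group T"
  shows "product_group B (\<lambda>_. T) \<cong> product_group {..<card B} (\<lambda>_. T)"
proof -
  obtain \<beta> where "bij_betw \<beta> {0..<card B} B"
    using ex_bij_betw_nat_finite[OF assms(1)] by blast
  then show ?thesis
    using product_group_iso_reindex[of \<beta> "{..<card B}" B "\<lambda>_. T"] assms(2)
    by (simp add: atLeast0LessThan comp_def)
qed

section \<open>Quotients of direct powers of a nonabelian simple group\<close>

lemma power_of_simple_kernel_kills_coordinate: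
  assumes T: "simple_group T" and noncomm: "\<not> comm_group T" and Q: "group Q"
    and \<sigma>: "\<sigma> \<in> hom (product_group L (\<lambda>_. T)) Q"
    and x: "x \<in> kernel (product_group L (\<lambda>_. T)) Q \<sigma>" and j: "j \<in> L" and xj: "x j \<noteq> \<one>\<^bsub>T\<^esub>"
    and t: "t \<in> carrier T"
  shows "\<sigma> (coordinate_embedding (\<lambda>_. T) L j t) = \<one>\<^bsub>Q\<^esub>"
proof -
  interpret T: simple_group T by (rule T)
  define P where "P = product_group L (\<lambda>_. T)"
  define E where "E = coordinate_embedding (\<lambda>_. T) L j"
  interpret P: group P
    unfolding P_def using T.is_group by simp
  interpret \<sigma>: group_hom P Q \<sigma>
    using \<sigma> Q by (simp add: group_hom_def group_hom_axioms_def P_def)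
  have E: "E \<in> hom T P"
    unfolding E_def P_def using T.is_group j by (intro coordinate_embedding_hom)
  interpret \<sigma>E: group_hom T Q "\<sigma> \<circ> E"
    using hom_compose[OF E \<sigma>[folded P_def]] Q by (simp add: group_hom_def group_hom_axioms_def)
  have xP: "x \<in> carrier P" and \<sigma>x: "\<sigma> x = \<one>\<^bsub>Q\<^esub>"
    using x by (simp_all add: kernel_def P_def)
  have xj_carrier: "x j \<in> carrier T"
    using xP j by (auto simp: P_def)
  have commutator: "x j \<otimes>\<^bsub>T\<^esub> s \<otimes>\<^bsub>T\<^esub> inv\<^bsub>T\<^esub> x j \<otimes>\<^bsub>T\<^esub> inv\<^bsub>T\<^esub> s \<in> kernel T Q (\<sigma> \<circ> E)"
    if s: "s \<in> carrier T" for s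
  proof -
    have "E s \<in> carrier P"
      using E s by (rule hom_in_carrier)
    moreover have "E (x j \<otimes>\<^bsub>T\<^esub> s \<otimes>\<^bsub>T\<^esub> inv\<^bsub>T\<^esub> x j \<otimes>\<^bsub>T\<^esub> inv\<^bsub>T\<^esub> s)
        = x \<otimes>\<^bsub>P\<^esub> E s \<otimes>\<^bsub>P\<^esub> inv\<^bsub>P\<^esub> x \<otimes>\<^bsub>P\<^esub> inv\<^bsub>P\<^esub> E s"
      unfolding E_def P_def
      by (rule coordinate_embedding_commutator[OF _ xP[unfolded P_def] j s]) (rule T.is_group)
    ultimately show ?thesis
      using s xj_carrier xP \<sigma>x by (simp add: kernel_def)
  qed
  have "kernel T Q (\<sigma> \<circ> E) \<noteq> {\<one>\<^bsub>T\<^esub>}"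
  proof
    assume trivial: "kernel T Q (\<sigma> \<circ> E) = {\<one>\<^bsub>T\<^esub>}"
    have "x j \<otimes>\<^bsub>T\<^esub> s = s \<otimes>\<^bsub>T\<^esub> x j" if s: "s \<in> carrier T" for s
    proof (rule T.commutator_eq_one_imp_commute[OF xj_carrier s])
      show "x j \<otimes>\<^bsub>T\<^esub> s \<otimes>\<^bsub>T\<^esub> inv\<^bsub>T\<^esub> x j \<otimes>\<^bsub>T\<^esub> inv\<^bsub>T\<^esub> s = \<one>\<^bsub>T\<^esub>"
        using commutator[OF s] unfolding trivial by simp
    qed
    then have "x j \<in> center T"
      using xj_carrier by (simp add: center_def)
    then show False
      using T.noncomm_center_trivial[OF noncomm] xj by blast
  qed
  then have "kernel T Q (\<sigma> \<circ> E) = carrier T"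
    using T.no_real_normal_subgroup[OF \<sigma>E.normal_kernel] by blast
  then show ?thesis
    using t by (auto simp: kernel_def E_def)
qed

lemma kernel_hom_power_of_simple:
  fixes T :: "('t, 'd) monoid_scheme"
  assumes T: "simple_group T" and noncomm: "\<not> comm_group T" and L: "finite L"
    and Q: "group Q" and \<sigma>: "\<sigma> \<in> hom (product_group L (\<lambda>_. T)) Q"
  defines "J \<equiv> {j \<in> L. \<forall>t\<in>carrier T. \<sigma> (coordinate_embedding (\<lambda>_. T) L j t) = \<one>\<^bsub>Q\<^esub>}"
  shows "kernel (product_group L (\<lambda>_. T)) Q \<sigma>
           = {x \<in> carrier (product_group L (\<lambda>_. T)). \<forall>k\<in>L - J. x k = \<one>\<^bsub>T\<^esub>}"
proof (intro equalityI subsetI)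
  fix x assume x: "x \<in> kernel (product_group L (\<lambda>_. T)) Q \<sigma>"
  have "x k = \<one>\<^bsub>T\<^esub>" if "k \<in> L - J" for k
    using power_of_simple_kernel_kills_coordinate[OF T noncomm Q \<sigma> x] that unfolding J_def by blast
  then show "x \<in> {x \<in> carrier (product_group L (\<lambda>_. T)). \<forall>k\<in>L - J. x k = \<one>\<^bsub>T\<^esub>}"
    using x by (simp add: kernel_def)
next
  fix x assume "x \<in> {x \<in> carrier (product_group L (\<lambda>_. T)). \<forall>k\<in>L - J. x k = \<one>\<^bsub>T\<^esub>}"
  then have x: "x \<in> carrier (product_group L (\<lambda>_. T))" and support: "\<And>k. k \<in> L - J \<Longrightarrow> x k = \<one>\<^bsub>T\<^esub>"
    by simp_all
  have J: "J \<subseteq> L"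
    unfolding J_def by blast
  have "\<sigma> x = \<one>\<^bsub>Q\<^esub>"
    using J x support L simple_group.axioms(1)[OF T]
    by (intro hom_eq_one_if_support_killed[OF _ Q \<sigma>, of J x]) (simp_all add: J_def finite_subset)
  then show "x \<in> kernel (product_group L (\<lambda>_. T)) Q \<sigma>"
    using x by (simp add: kernel_def)
qed

theorem surj_hom_image_of_power_of_simple:
  fixes T :: "('t, 'd) monoid_scheme" and L :: "'i set"
  assumes T: "simple_group T" and noncomm: "\<not> comm_group T" and L: "finite L"
    and Q: "group Q" and \<sigma>: "\<sigma> \<in> hom (product_group L (\<lambda>_. T)) Q"
    and surj: "\<sigma> ` carrier (product_group L (\<lambda>_. T)) = carrier Q"
  shows "\<exists>J\<subseteq>L. Q \<cong> product_group {..<card (L - J)} (\<lambda>_. T)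
           \<and> (\<forall>j\<in>J. \<forall>t\<in>carrier T. \<sigma> (coordinate_embedding (\<lambda>_. T) L j t) = \<one>\<^bsub>Q\<^esub>)"
proof -
  interpret T: simple_group T by (rule T)
  define P where "P = product_group L (\<lambda>_. T)"
  define J where "J = {j \<in> L. \<forall>t\<in>carrier T. \<sigma> (coordinate_embedding (\<lambda>_. T) L j t) = \<one>\<^bsub>Q\<^esub>}"
  define R where "R = product_group (L - J) (\<lambda>_. T)"
  define \<rho> where "\<rho> = (\<lambda>x :: 'i \<Rightarrow> 't. restrict x (L - J))"
  interpret P: group P
    unfolding P_def using T.is_group by simp
  interpret \<sigma>: group_hom P Q \<sigma>
    using \<sigma> Q by (simp add: group_hom_def group_hom_axioms_def P_def)
  interpret \<rho>: group_hom P R \<rho>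
    using restrict_product_group_hom[of "L - J" L "\<lambda>_. T"] T.is_group
    by (simp add: group_hom_def group_hom_axioms_def P_def R_def \<rho>_def)
  have "kernel P Q \<sigma> = kernel P R \<rho>"
    unfolding P_def R_def \<rho>_def J_def kernel_restrict_product_group
    using kernel_hom_power_of_simple[OF T noncomm L Q \<sigma>] by simp
  have "Q \<cong> P Mod kernel P Q \<sigma>"
    using \<sigma>.FactGroup_iso[OF surj[folded P_def]]
    by (rule group.iso_sym[OF normal.factorgroup_is_group[OF \<sigma>.normal_kernel]])
  also have "\<dots> = P Mod kernel P R \<rho>"
    by (simp add: \<open>kernel P Q \<sigma> = kernel P R \<rho>\<close>)
  also have "\<dots> \<cong> R"
    using restrict_product_group_surj[of L "\<lambda>_. T" "L - J"] T.is_group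
    by (intro \<rho>.FactGroup_iso) (simp add: P_def R_def \<rho>_def)
  also have "\<dots> \<cong> product_group {..<card (L - J)} (\<lambda>_. T)"
    unfolding R_def using L T.is_group by (intro product_group_iso_lessThan_card) simp_all
  finally have "Q \<cong> product_group {..<card (L - J)} (\<lambda>_. T)" .
  moreover have "J \<subseteq> L" "\<forall>j\<in>J. \<forall>t\<in>carrier T. \<sigma> (coordinate_embedding (\<lambda>_. T) L j t) = \<one>\<^bsub>Q\<^esub>"
    unfolding J_def by blast+
  ultimately show ?thesis
    by blast
qed

section \<open>Subdirect products\<close>

lemma coordinate_survives_in_some_projection:
  assumes G: "group G"
    and homs: "\<And>i. i \<in> I \<Longrightarrow> group (Hs i) \<and> \<pi> i \<in> hom G (Hs i)"
    and separating: "\<And>x. \<lbrakk>x \<in> carrier G; \<forall>i\<in>I. \<pi> i x = \<one>\<^bsub>Hs i\<^esub>\<rbrakk> \<Longrightarrow> x = \<one>\<^bsub>G\<^esub>"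
    and N: "solvable_seq G N"
    and groups: "\<And>k. k \<in> L \<Longrightarrow> group (Gs k)"
    and \<phi>: "\<phi> \<in> hom G (product_group L Gs)" "\<phi> ` carrier G = carrier (product_group L Gs)"
    and j: "j \<in> L" and nonsolvable: "\<not> solvable (Gs j)"
  shows "\<exists>i\<in>I. \<exists>x\<in>carrier G. \<phi> x \<in> coordinate_embedding Gs L j ` carrier (Gs j) \<and> \<pi> i x \<notin> \<pi> i ` N"
proof (rule ccontr)
  assume contra: "\<not> ?thesis"
  define P where "P = product_group L Gs"
  define E where "E = coordinate_embedding Gs L j"
  define K where "K = {x \<in> carrier G. \<phi> x \<in> E ` carrier (Gs j)}"
  interpret P: group P
    unfolding P_def using groups by simp
  interpret \<phi>: group_hom G P \<phi>
    using \<phi>(1) G P.is_group by (simp add: group_hom_def group_hom_axioms_def P_def)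
  interpret E: group_hom "Gs j" P E
    using coordinate_embedding_hom[OF groups j] groups[OF j] P.is_group
    by (simp add: group_hom_def group_hom_axioms_def P_def E_def)
  have K: "subgroup K G"
    unfolding K_def using E.img_is_subgroup by (rule \<phi>.subgroup_vimage)
  have "solvable_seq G K"
    using G homs separating N K
  proof (rule solvable_seq_if_images_in_solvable)
    show "\<pi> i ` K \<subseteq> \<pi> i ` N" if i: "i \<in> I" for i
    proof (rule image_subsetI)
      fix x assume "x \<in> K"
      then show "\<pi> i x \<in> \<pi> i ` N"
        using contra i unfolding K_def E_def by blast
    qed
  qed
  then have "solvable_seq P (\<phi> ` K)"
    by (rule \<phi>.solvable_imp_solvable_img)
  moreover have "\<phi> ` K = E ` carrier (Gs j)"
  proof
    show "\<phi> ` K \<subseteq> E ` carrier (Gs j)"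
      unfolding K_def by blast
    show "E ` carrier (Gs j) \<subseteq> \<phi> ` K"
    proof (rule image_subsetI)
      fix t assume t: "t \<in> carrier (Gs j)"
      then obtain x where x: "x \<in> carrier G" and \<phi>x: "\<phi> x = E t"
        using E.hom_closed \<phi>(2) unfolding P_def by (metis imageE)
      then have "x \<in> K"
        using t unfolding K_def by blast
      then show "E t \<in> \<phi> ` K"
        using \<phi>x by (metis image_eqI)
    qed
  qed
  moreover have "inj_on E (carrier (Gs j))"
    unfolding E_def by (rule inj_on_coordinate_embedding[OF j])
  ultimately have "solvable_seq (Gs j) (carrier (Gs j))"
    using E.solvable_img_imp_solvable[OF E.G.subgroup_self] by simp
  then show False
    using nonsolvable by (simp add: solvable_def)
qed

lemma quotient_of_factor_is_power_of_simple:
  fixes T :: "('t, 'd) monoid_scheme"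
  assumes T: "simple_group T" and noncomm: "\<not> comm_group T" and L: "finite L"
    and G: "group G" and N: "N \<lhd> G"
    and \<phi>: "\<phi> \<in> hom G (product_group L (\<lambda>_. T))"
      "\<phi> ` carrier G = carrier (product_group L (\<lambda>_. T))"
      "kernel G (product_group L (\<lambda>_. T)) \<phi> = N"
    and F: "group F" and f: "f \<in> hom G F" "f ` carrier G = carrier F"
  shows "\<exists>J\<subseteq>L. F Mod f ` N \<cong> product_group {..<card (L - J)} (\<lambda>_. T)
           \<and> (\<forall>j\<in>J. \<forall>x\<in>carrier G.
                 \<phi> x \<in> coordinate_embedding (\<lambda>_. T) L j ` carrier T \<longrightarrow> f x \<in> f ` N)"
proof -
  interpret T: simple_group T by (rule T)
  interpret f: group_hom G F f
    using f(1) G F by (simp add: group_hom_def group_hom_axioms_def)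
  interpret fN: normal "f ` N" F
    using normal.surj_hom_normal_subgroup[OF N f.group_hom_axioms f(2)] .
  have P: "group (product_group L (\<lambda>_. T))"
    using T.is_group by simp
  obtain \<sigma> where \<sigma>: "\<sigma> \<in> hom (product_group L (\<lambda>_. T)) (F Mod f ` N)"
    and \<sigma>_surj: "\<sigma> ` carrier (product_group L (\<lambda>_. T)) = carrier (F Mod f ` N)"
    and \<sigma>\<phi>: "\<forall>x\<in>carrier G. \<sigma> (\<phi> x) = f ` N #>\<^bsub>F\<^esub> f x"
    using quotient_map_factors_through_surj[OF G P F N \<phi> f] by blast
  obtain J where J: "J \<subseteq> L" and iso: "F Mod f ` N \<cong> product_group {..<card (L - J)} (\<lambda>_. T)"
    and killed: "\<forall>j\<in>J. \<forall>t\<in>carrier T. \<sigma> (coordinate_embedding (\<lambda>_. T) L j t) = \<one>\<^bsub>F Mod f ` N\<^esub>"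
    using surj_hom_image_of_power_of_simple[OF T noncomm L fN.factorgroup_is_group \<sigma> \<sigma>_surj] by blast
  have "\<forall>j\<in>J. \<forall>x\<in>carrier G. \<phi> x \<in> coordinate_embedding (\<lambda>_. T) L j ` carrier T \<longrightarrow> f x \<in> f ` N"
  proof (intro ballI impI)
    fix j x assume j: "j \<in> J" and x: "x \<in> carrier G"
      and "\<phi> x \<in> coordinate_embedding (\<lambda>_. T) L j ` carrier T"
    then obtain t where t: "t \<in> carrier T" and \<phi>x: "\<phi> x = coordinate_embedding (\<lambda>_. T) L j t"
      by blast
    have "f ` N #>\<^bsub>F\<^esub> f x = \<sigma> (\<phi> x)"
      using \<sigma>\<phi> x by simp
    also have "\<dots> = f ` N"
      using killed j t \<phi>x by simp
    finally have "f ` N #>\<^bsub>F\<^esub> f x = f ` N" .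
    then show "f x \<in> f ` N"
      using f.H.coset_join1 f.hom_closed[OF x] fN.subgroup_axioms by blast
  qed
  with J iso show ?thesis
    by blast
qed

theorem factor_quotients_are_powers_of_simple:
  fixes T :: "('t, 'd) monoid_scheme"
  assumes T: "simple_group T" and noncomm: "\<not> comm_group T" and L: "finite L" and I: "finite I"
    and G: "group G" and N: "N \<lhd> G" and N_solvable: "solvable_seq G N"
    and \<phi>: "\<phi> \<in> hom G (product_group L (\<lambda>_. T))"
      "\<phi> ` carrier G = carrier (product_group L (\<lambda>_. T))"
      "kernel G (product_group L (\<lambda>_. T)) \<phi> = N"
    and homs: "\<And>i. i \<in> I \<Longrightarrow> group (Hs i) \<and> \<pi> i \<in> hom G (Hs i)"
    and surj: "\<And>i. i \<in> I \<Longrightarrow> \<pi> i ` carrier G = carrier (Hs i)"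
    and separating: "\<And>x. \<lbrakk>x \<in> carrier G; \<forall>i\<in>I. \<pi> i x = \<one>\<^bsub>Hs i\<^esub>\<rbrakk> \<Longrightarrow> x = \<one>\<^bsub>G\<^esub>"
  shows "\<exists>ls. card L \<le> (\<Sum>i\<in>I. ls i)
           \<and> (\<forall>i\<in>I. Hs i Mod \<pi> i ` N \<cong> product_group {..<ls i} (\<lambda>_. T))"
proof -
  interpret T: simple_group T by (rule T)
  have "\<exists>J\<subseteq>L. Hs i Mod \<pi> i ` N \<cong> product_group {..<card (L - J)} (\<lambda>_. T)
          \<and> (\<forall>j\<in>J. \<forall>x\<in>carrier G.
                \<phi> x \<in> coordinate_embedding (\<lambda>_. T) L j ` carrier T \<longrightarrow> \<pi> i x \<in> \<pi> i ` N)"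
    if "i \<in> I" for i
    using quotient_of_factor_is_power_of_simple[OF T noncomm L G N \<phi>] homs[OF that] surj[OF that] by blast
  then obtain J where J: "\<And>i. i \<in> I \<Longrightarrow> J i \<subseteq> L"
      "\<And>i. i \<in> I \<Longrightarrow> Hs i Mod \<pi> i ` N \<cong> product_group {..<card (L - J i)} (\<lambda>_. T)"
      "\<And>i. i \<in> I \<Longrightarrow> \<forall>j\<in>J i. \<forall>x\<in>carrier G.
          \<phi> x \<in> coordinate_embedding (\<lambda>_. T) L j ` carrier T \<longrightarrow> \<pi> i x \<in> \<pi> i ` N"
    by metis
  have "L \<subseteq> (\<Union>i\<in>I. L - J i)"
  proof
    fix j assume j: "j \<in> L"
    have "\<exists>i\<in>I. \<exists>x\<in>carrier G. \<phi> x \<in> coordinate_embedding (\<lambda>_. T) L j ` carrier T \<and> \<pi> i x \<notin> \<pi> i ` N"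
      using coordinate_survives_in_some_projection[OF G homs separating N_solvable T.is_group \<phi>(1,2) j
          T.noncomm_not_solvable[OF noncomm]] .
    then show "j \<in> (\<Union>i\<in>I. L - J i)"
      using J(3) j by blast
  qed
  then have "card L \<le> card (\<Union>i\<in>I. L - J i)"
    using I L by (intro card_mono) auto
  also have "\<dots> \<le> (\<Sum>i\<in>I. card (L - J i))"
    by (rule card_UN_le[OF I])
  finally show ?thesis
    using J(2) by blast
qed

theorem corollary2p6:
  fixes Hs :: "nat \<Rightarrow> ('a, 'c) monoid_scheme"
    and H N :: "(nat \<Rightarrow> 'a) set"
    and T :: "('t, 'd) monoid_scheme"
    and r l :: nat
  assumes groups: "\<And>i. i \<in> {1..r} \<Longrightarrow> group (Hs i)"
    and subdirect: "subdirect_product H Hs {1..r}"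
    and N_normal: "N \<lhd> (product_group {1..r} Hs)\<lparr>carrier := H\<rparr>"
    and N_soluble: "solvable ((product_group {1..r} Hs)\<lparr>carrier := N\<rparr>)"
    and T_simple: "simple_group T"
    and T_nonabelian: "\<not> comm_group T"
    and l_pos: "l > 0"
    and quot: "((product_group {1..r} Hs)\<lparr>carrier := H\<rparr>) Mod N \<cong> product_group {..<l} (\<lambda>_. T)"
  shows "\<exists>ls :: nat \<Rightarrow> nat. (\<Sum>i\<in>{1..r}. ls i) \<ge> l \<and>
           (\<forall>i\<in>{1..r}. Hs i Mod ((\<lambda>h. h i) ` N) \<cong> product_group {..<ls i} (\<lambda>_. T))"
proof -
  interpret T: simple_group T by (rule T_simple)
  define G where "G = (product_group {1..r} Hs)\<lparr>carrier := H\<rparr>"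
  have H: "subgroup H (product_group {1..r} Hs)"
    and surj: "\<And>i. i \<in> {1..r} \<Longrightarrow> (\<lambda>h. h i) ` carrier G = carrier (Hs i)"
    using subdirect unfolding subdirect_product_def G_def by auto
  have G: "group G"
    unfolding G_def using product_group[OF groups] H by (rule group.subgroup_imp_group)
  have homs: "group (Hs i) \<and> (\<lambda>h. h i) \<in> hom G (Hs i)" if "i \<in> {1..r}" for i
    using groups[OF that] that subgroup.subset[OF H] by (auto intro!: homI simp: G_def PiE_iff)
  have separating: "x = \<one>\<^bsub>G\<^esub>" if "x \<in> carrier G" "\<forall>i\<in>{1..r}. x i = \<one>\<^bsub>Hs i\<^esub>" for x
    using that subgroup.subset[OF H] product_group_eq_oneI[of x "{1..r}" Hs] by (auto simp: G_def)
  have N: "N \<lhd> G"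
    using N_normal by (simp add: G_def)
  have N_solvable: "solvable_seq G N"
    using group.solvable_seq_if_solvable_subgroup[OF G normal.axioms(1)[OF N]] N_soluble
    by (simp add: G_def)
  obtain \<phi> where \<phi>: "\<phi> \<in> hom G (product_group {..<l} (\<lambda>_. T))"
      "\<phi> ` carrier G = carrier (product_group {..<l} (\<lambda>_. T))"
      "kernel G (product_group {..<l} (\<lambda>_. T)) \<phi> = N"
    using normal.FactGroup_iso_imp_surj_hom[OF N _ quot[folded G_def]] T.is_group by auto
  have "\<exists>ls. card {..<l} \<le> (\<Sum>i\<in>{1..r}. ls i)
          \<and> (\<forall>i\<in>{1..r}. Hs i Mod (\<lambda>h. h i) ` N \<cong> product_group {..<ls i} (\<lambda>_. T))"
    using factor_quotients_are_powers_of_simple[OF T_simple T_nonabelian finite_lessThan finite_atLeastAtMost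
        G N N_solvable \<phi> homs surj separating] .
  then show ?thesis
    by simp
qed

end
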